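(* Let $v_1\ge v_2>0$, $m\in\mathbb{Z}_{\ge1}$ and $0<b<m$. If a strategy profile $(X,Y)$ with $\mathbf{E}(X)=m$ and $\mathbf{E}(Y)=b$ is a Nash equilibrium of the discrete all-pay auction with valuations $v_1,v_2$, then $Y=\left(1-\frac bm\right)\delta_0+\frac bm Z$, where: (a) if $m=1$: $Z=\lambda_{\mathrm{O}}U_{\mathrm{O}}^1+\lambda_{\mathrm{E}}U_{\mathrm{E}}^1$ with $\lambda_{\mathrm{O}},\lambda_{\mathrm{E}}\ge0$, $\lambda_{\mathrm{O}}+\lambda_{\mathrm{E}}=1$, $\frac{\lambda_{\mathrm{E}}}{2}\ge1-\frac{2}{bv_1}$ and $\frac{\lambda_{\mathrm{E}}}{2}\le\frac1b-\frac{2}{bv_1}$; (b) if $m\ge2$: $Z=\lambda_{\mathrm{O}}U_{\mathrm{O}}^m+\lambda_{\mathrm{E}}U_{\mathrm{E}}^m+\lambda_{\mathrm{O}\uparrow1}U_{\mathrm{O}\uparrow1}^m+\sum_{j=1}^{m-1}\lambda_jW_j^m$ with $\lambda_{\mathrm{O}},\lambda_{\mathrm{E}},\lambda_{\mathrm{O}\uparrow1},\lambda_1,\dots,\lambda_{m-1}\ge0$, $\lambda_{\mathrm{O}}+\lambda_{\mathrm{E}}+\lambda_{\mathrm{O}\uparrow1}+\sum_{j=1}^{m-1}\lambda_j=1$, $\frac{\lambda_{\mathrm{E}}}{m+1}+\frac{1}{2m}\sum_{j=1}^{m-1}\lambda_j\le\frac mb\left(1-\frac{v_2}{v_1}\right)$,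 $\frac{\lambda_{\mathrm{O}}}{m}+\frac{\lambda_{\mathrm{E}}}{m+1}+\frac{\lambda_{\mathrm{O}\uparrow1}}{m-1}+\frac{1}{m}\sum_{j=1}^{m-1}\lambda_j=\frac{2m}{bv_1}$, and, in the case $b>m-1$, $\frac{1}{2m}\sum_{j=1}^{m-1}\lambda_j+\frac{\lambda_{\mathrm{O}\uparrow1}}{m-1}\le\frac{m-b}{b}$.
   Context: Discrete all-pay auction: two players, 1 and 2, value a prize at $v_1$ and $v_2$ respectively, where $v_1\ge v_2>0$. A (mixed) strategy is a probability distribution on $\mathbb{Z}_{\ge 0}$ with finite mean, identified with a $\mathbb{Z}_{\ge0}$-valued random variable; the two players' choices are independent. If player 1 uses $X$ and player 2 uses $Y$, the expected payoffs are $P^1(X,Y)=v_1\Pr(X>Y)+\frac{v_1}{2}\Pr(X=Y)-\mathbf{E}(X)$ and $P^2(Y,X)=v_2\Pr(Y>X)+\frac{v_2}{2}\Pr(X=Y)-\mathbf{E}(Y)$. A Nash equilibrium of the all-pay auction is a pair $(X,Y)$ with $P^1(X,Y)\ge P^1(X',Y)$ and $P^2(Y,X)\ge P^2(Y',X)$ for all strategies $X',Y'$. $\delta_j$ denotes the point mass at $j$; $\lambda A+(1-\lambda)B$ denotes the mixture of distributions $A$ and $B$ (similarly for longer convex combinations). Special distributions: for $m\ge1$, $U_{\mathrm{O}}^m$ is the uniform distribution on $\{1,3,\dots,2m-1\}$; for $m\ge0$, $U_{\mathrm{E}}^m$ is the uniform distribution on $\{0,2,\dots,2m\}$; for $m\ge2$,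 $U_{\mathrm{O}\uparrow1}^m$ is the uniform distribution on $\{2,4,\dots,2m-2\}$; for $m\ge2$ and $1\le j\le m-1$, $W_j^m=\frac{1}{2m}\delta_0+\sum_{i=1}^{j-1}\frac1m\delta_{2i}+\frac{1}{2m}\delta_{2j}+\sum_{i=j+1}^{m}\frac1m\delta_{2i-1}$. *)

theory Defs
  imports "HOL-Probability.Probability"
begin

definition strategy :: "nat pmf \<Rightarrow> bool" where
  "strategy X \<longleftrightarrow> integrable (measure_pmf X) real"

definition mean :: "nat pmf \<Rightarrow> real" where
  "mean X = measure_pmf.expectation X real"

definition payoff :: "real \<Rightarrow> nat pmf \<Rightarrow> nat pmf \<Rightarrow> real" where
  "payoff v X Y =
     v * measure_pmf.prob (pair_pmf X Y) {(x, y). x > y}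
   + v / 2 * measure_pmf.prob (pair_pmf X Y) {(x, y). x = y}
   - mean X"

definition nash_eq :: "real \<Rightarrow> real \<Rightarrow> nat pmf \<Rightarrow> nat pmf \<Rightarrow> bool" where
  "nash_eq v1 v2 X Y \<longleftrightarrow> strategy X \<and> strategy Y \<and>
     (\<forall>X'. strategy X' \<longrightarrow> payoff v1 X Y \<ge> payoff v1 X' Y) \<and>
     (\<forall>Y'. strategy Y' \<longrightarrow> payoff v2 Y X \<ge> payoff v2 Y' X)"

definition U_O :: "nat \<Rightarrow> nat \<Rightarrow> real" where
  "U_O m k = (if odd k \<and> k \<le> 2*m - 1 then 1 / real m else 0)"

definition U_E :: "nat \<Rightarrow> nat \<Rightarrow> real" where
  "U_E m k = (if even k \<and> k \<le> 2*m then 1 / real (m + 1) else 0)"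

definition U_Oup1 :: "nat \<Rightarrow> nat \<Rightarrow> real" where
  "U_Oup1 m k = (if even k \<and> 2 \<le> k \<and> k \<le> 2*m - 2 then 1 / (real m - 1) else 0)"

definition W :: "nat \<Rightarrow> nat \<Rightarrow> nat \<Rightarrow> real" where
  "W m j k =
     (if k = 0 then 1 / (2 * real m)
      else if even k \<and> 2 \<le> k \<and> k \<le> 2*j - 2 then 1 / real m
      else if k = 2*j then 1 / (2 * real m)
      else if odd k \<and> 2*j + 1 \<le> k \<and> k \<le> 2*m - 1 then 1 / real m
      else 0)"

end

theory Submission
  imports Defs
begin

text \<open>Against a mixed bid Y a pure bid k earns v * mid_cdf Y k - k, where mid_cdf counts ties
  with weight one half; in equilibrium this is at most the equilibrium payoff, with equality on
  the support. Adding these inequalities over the odd bids of player 1 and the even bids of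
  player 2, comparing with the means, and using that the equilibrium payoffs u1, u2 satisfy
  v2 (u1 + E X) + v1 (u2 + E Y) = v1 v2, forces u2 = 0 and v2 = 2m. Then the inequalities for X
  are tight, so X is uniform on the odd numbers below 2m, and Y lives on [0, 2m]. Indifference of
  player 1 on these odd numbers determines Y up to the nonnegative amounts by which the pairs
  (2j-1, 2j) fall short of mass 2 / v1; those shortfalls are the mixture weights.\<close>

lemma measure_pair_pmf_eq_expectation:
  "measure_pmf.prob (pair_pmf X Y) S =
   measure_pmf.expectation X (\<lambda>x. measure_pmf.prob Y {y. (x, y) \<in> S})"
proof -
  have emeasure: "emeasure (measure_pmf (pair_pmf X Y)) S =
      (\<integral>\<^sup>+x. emeasure (measure_pmf Y) {y. (x, y) \<in> S} \<partial>X)"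
    unfolding pair_pmf_def
    by (simp add: emeasure_bind_pmf nn_integral_indicator[symmetric] indicator_def
        cong: nn_integral_cong)
  have "ennreal (measure_pmf.prob (pair_pmf X Y) S) =
        (\<integral>\<^sup>+x. ennreal (measure_pmf.prob Y {y. (x, y) \<in> S}) \<partial>X)"
    by (simp add: measure_pmf.emeasure_eq_measure[symmetric] emeasure)
  also have "\<dots> = ennreal (measure_pmf.expectation X (\<lambda>x. measure_pmf.prob Y {y. (x, y) \<in> S}))"
    by (rule nn_integral_eq_integral)
       (auto intro: measure_pmf.integrable_const_bound[where B = 1])
  finally show ?thesis
    by (simp add: integral_nonneg_AE)
qed

definition mid_cdf :: "nat pmf \<Rightarrow> nat \<Rightarrow> real" where
  "mid_cdf Y k = measure_pmf.prob Y {y. y < k} + pmf Y k / 2"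

lemma measure_pmf_less_Suc: "measure_pmf.prob Y {y. y < Suc k} = measure_pmf.prob Y {y. y < k} + pmf Y k"
proof -
  have "{y. y < Suc k} = {y. y < k} \<union> {k}" by auto
  then show ?thesis
    by (simp only:) (subst measure_pmf.finite_measure_Union, auto simp: measure_pmf_single)
qed

lemma mid_cdf_nonneg: "0 \<le> mid_cdf Y k"
  by (simp add: mid_cdf_def)

lemma mid_cdf_le_1: "mid_cdf Y k \<le> 1"
  using measure_pmf_less_Suc[of Y k] measure_pmf.prob_le_1[of Y "{y. y < Suc k}"] pmf_nonneg[of Y k]
  unfolding mid_cdf_def by linarith

lemma mid_cdf_0: "mid_cdf Y 0 = pmf Y 0 / 2"
  by (simp add: mid_cdf_def)

lemma mid_cdf_Suc: "mid_cdf Y (Suc k) = mid_cdf Y k + (pmf Y k + pmf Y (Suc k)) / 2"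
  by (simp add: mid_cdf_def measure_pmf_less_Suc field_simps)

lemma mid_cdf_pred: "0 < k \<Longrightarrow> mid_cdf Y k = mid_cdf Y (k - 1) + (pmf Y (k - 1) + pmf Y k) / 2"
  using mid_cdf_Suc[of Y "k - 1"] by simp

lemma mid_cdf_at_max:
  assumes "\<And>y. y \<in> set_pmf Y \<Longrightarrow> y \<le> n"
  shows "mid_cdf Y n = 1 - pmf Y n / 2"
proof -
  have "measure_pmf.prob Y {y. y < Suc n} = 1"
    using assms by (subst measure_pmf.prob_eq_1) (auto simp: AE_measure_pmf_iff less_Suc_eq_le)
  then show ?thesis
    by (simp add: mid_cdf_def measure_pmf_less_Suc)
qed

definition mid_step :: "nat \<Rightarrow> nat \<Rightarrow> real" where
  "mid_step k y = (if y < k then 1 else if y = k then 1 / 2 else 0)"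

lemma integrable_mid_step: "integrable (measure_pmf Y) (mid_step k)"
  by (rule measure_pmf.integrable_const_bound[where B = 1]) (auto simp: mid_step_def)

lemma mid_cdf_eq_expectation: "mid_cdf Y k = measure_pmf.expectation Y (mid_step k)"
proof -
  have "mid_step k = (\<lambda>y. indicator {y. y < k} y + indicator {k} y / 2)"
    by (auto simp: mid_step_def indicator_def fun_eq_iff)
  moreover have "integrable (measure_pmf Y) (indicat_real A)" for A
    by (rule measure_pmf.integrable_const_bound[where B = 1]) auto
  ultimately show ?thesis
    by (simp add: mid_cdf_def measure_pmf_single)
qed

lemma sum_odd_mid_step: "(\<Sum>i<n. 2 * (1 - mid_step (2 * i + 1) y)) = real (min y (2 * n))"
  by (induction n) (auto simp: mid_step_def)

lemma sum_even_mid_step: "(\<Sum>i<Suc n. 2 * (1 - mid_step (2 * i) y)) = real (min (y + 1) (2 * n + 2))"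
  by (induction n) (auto simp: mid_step_def)

lemma expectation_sum_mid_step:
  "(\<Sum>i\<in>I. 2 * (1 - mid_cdf Y (g i))) =
   measure_pmf.expectation Y (\<lambda>y. \<Sum>i\<in>I. 2 * (1 - mid_step (g i) y))"
  by (simp add: mid_cdf_eq_expectation integrable_mid_step measure_pmf.prob_space
      Bochner_Integration.integral_diff Bochner_Integration.integral_sum)

lemma sum_odd_mid_cdf_le_mean:
  assumes "strategy Y"
  shows "(\<Sum>i<n. 2 * (1 - mid_cdf Y (2 * i + 1))) \<le> mean Y"
  unfolding expectation_sum_mid_step sum_odd_mid_step mean_def
  using assms unfolding strategy_def
  by (intro integral_mono) (auto intro: measure_pmf.integrable_const_bound[where B = "2 * n"])

lemma sum_even_mid_cdf_le_mean:
  assumes "strategy Y"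
  shows "(\<Sum>i<Suc n. 2 * (1 - mid_cdf Y (2 * i))) \<le> mean Y + 1"
proof -
  have "(\<Sum>i<Suc n. 2 * (1 - mid_cdf Y (2 * i))) \<le> measure_pmf.expectation Y (\<lambda>y. real y + 1)"
    unfolding expectation_sum_mid_step sum_even_mid_step
    using assms unfolding strategy_def
    by (intro integral_mono) (auto intro: measure_pmf.integrable_const_bound[where B = "2 * n + 2"])
  also have "\<dots> = mean Y + 1"
    using assms by (simp add: strategy_def mean_def measure_pmf.prob_space)
  finally show ?thesis .
qed

lemma strategy_return_pmf: "strategy (return_pmf k)"
  unfolding strategy_def by (rule integrable_measure_pmf_finite) simp

lemma payoff_return_pmf: "payoff v (return_pmf k) Y = v * mid_cdf Y k - real k"
proof -
  have "Pair k -` {(x, y). x = y} = {k}" by auto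
  then show ?thesis
    by (simp add: payoff_def mean_def mid_cdf_def pair_return_pmf1 vimage_def measure_pmf_single
        algebra_simps)
qed

lemma payoff_eq_expectation:
  assumes "strategy X"
  shows "payoff v X Y = measure_pmf.expectation X (\<lambda>x. v * mid_cdf Y x - real x)"
proof -
  have "{y. (x, y) \<in> {(x, y). x = y}} = {x}" for x :: nat by auto
  then have tie: "measure_pmf.prob (pair_pmf X Y) {(x, y). x = y} =
      measure_pmf.expectation X (pmf Y)"
    by (simp add: measure_pair_pmf_eq_expectation measure_pmf_single)
  have "integrable X (\<lambda>x. measure_pmf.prob Y {y. y < x})" "integrable X (pmf Y)"
    by (auto intro!: measure_pmf.integrable_const_bound[where B = 1] simp: pmf_le_1)
  with assms show ?thesis
    by (simp add: payoff_def mean_def mid_cdf_def tie measure_pair_pmf_eq_expectation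
        measure_pmf_single strategy_def algebra_simps
        Bochner_Integration.integral_diff Bochner_Integration.integral_add)
qed

lemma integrable_pure_payoff:
  assumes "strategy X"
  shows "integrable X (\<lambda>x. v * mid_cdf Y x - real x)"
proof -
  have "integrable X (mid_cdf Y)"
    by (rule measure_pmf.integrable_const_bound[where B = 1]) (auto simp: mid_cdf_nonneg mid_cdf_le_1)
  with assms show ?thesis
    unfolding strategy_def by auto
qed

lemma payoff_constant_sum:
  "v2 * (payoff v1 X Y + mean X) + v1 * (payoff v2 Y X + mean Y) = v1 * v2"
proof -
  let ?P = "measure_pmf.prob (pair_pmf X Y)"
  have swap: "measure_pmf.prob (pair_pmf Y X) A = ?P ((\<lambda>(x, y). (y, x)) -` A)" for A
    by (subst pair_commute_pmf) (simp only: measure_map_pmf)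
  have "(\<lambda>(x, y). (y, x)) -` {(x, y). x > y} = {(x :: nat, y). x < y}"
       "(\<lambda>(x, y). (y, x)) -` {(x, y). x = y} = {(x :: nat, y). x = y}" by auto
  then have swapped: "payoff v2 Y X + mean Y =
      v2 * ?P {(x, y). x < y} + v2 / 2 * ?P {(x, y). x = y}"
    by (simp add: payoff_def swap)
  have "?P {(x, y). x > y} + ?P {(x, y). x < y} + ?P {(x, y). x = y} =
        ?P ({(x, y). x > y} \<union> {(x, y). x < y} \<union> {(x, y). x = y})"
    by (subst measure_pmf.finite_measure_Union, auto)+
  also have "{(x :: nat, y). x > y} \<union> {(x, y). x < y} \<union> {(x, y). x = y} = UNIV" by auto
  finally have "v1 * v2 * (?P {(x, y). x > y} + ?P {(x, y). x < y} + ?P {(x, y). x = y}) = v1 * v2"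
    by simp
  then show ?thesis
    unfolding swapped by (simp add: payoff_def algebra_simps)
qed

lemma expectation_eq_bound_on_support:
  fixes f :: "'a \<Rightarrow> real"
  assumes "\<And>k. f k \<le> a" and "measure_pmf.expectation X f = a"
    and "integrable X f" and "x \<in> set_pmf X"
  shows "f x = a"
proof -
  have "measure_pmf.expectation X (\<lambda>k. a - f k) = 0"
    using assms(2,3) by (simp add: Bochner_Integration.integral_diff measure_pmf.prob_space)
  then have "AE k in X. a - f k = 0"
    using assms(1,3) by (subst (asm) integral_nonneg_eq_0_iff_AE) auto
  then show ?thesis
    using assms(4) by (auto simp: AE_measure_pmf_iff)
qed

lemma U_O_odd: "1 \<le> i \<Longrightarrow> i \<le> m \<Longrightarrow> U_O m (2 * i - 1) = 1 / real m"
  by (auto simp: U_O_def)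

lemma U_E_odd: "1 \<le> i \<Longrightarrow> U_E m (2 * i - 1) = 0"
  by (auto simp: U_E_def)

lemma U_Oup1_odd: "1 \<le> i \<Longrightarrow> U_Oup1 m (2 * i - 1) = 0"
  by (auto simp: U_Oup1_def)

lemma U_Oup1_even: "1 \<le> i \<Longrightarrow> U_Oup1 m (2 * i) = (if i < m then 1 / (real m - 1) else 0)"
  by (auto simp: U_Oup1_def)

lemma sum_W_odd:
  assumes "1 \<le> i" "i \<le> m"
  shows "(\<Sum>j=1..m-1. g j * W m j (2 * i - 1)) = (\<Sum>j=1..<i. g j) / real m"
proof -
  have "W m j (2 * i - 1) = (if j < i then 1 / real m else 0)" if "1 \<le> j" for j
    using assms that by (auto simp: W_def) presburger+
  then have "(\<Sum>j=1..m-1. g j * W m j (2 * i - 1)) = (\<Sum>j=1..m-1. if j < i then g j / real m else 0)"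
    by (intro sum.cong) auto
  also have "\<dots> = (\<Sum>j\<in>{1..m-1} \<inter> {..<i}. g j / real m)"
    by (simp add: sum.inter_restrict)
  also have "{1..m-1} \<inter> {..<i} = {1..<i}"
    using assms by auto
  finally show ?thesis
    by (simp add: sum_divide_distrib)
qed

lemma sum_W_even:
  assumes "1 \<le> i" "i < m"
  shows "(\<Sum>j=1..m-1. g j * W m j (2 * i)) = (\<Sum>j=Suc i..<m. g j) / real m + g i / (2 * real m)"
proof -
  have "{1..m-1} = {1..<i} \<union> ({i} \<union> {Suc i..<m})"
    using assms by auto
  moreover have "W m j (2 * i) = 0" if "j < i" for j
    using that by (auto simp: W_def)
  moreover have "W m j (2 * i) = 1 / real m" if "i < j" for j
    using that assms by (auto simp: W_def)
  ultimately show ?thesis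
    using assms by (simp add: sum.union_disjoint W_def sum_divide_distrib)
qed

lemma sum_W_zero: "(\<Sum>j=1..m-1. g j * W m j 0) = (\<Sum>j=1..m-1. g j) / (2 * real m)"
  by (simp add: W_def sum_divide_distrib)

lemma sum_W_vanish:
  assumes "k = 2 * m \<or> 2 * m < k"
  shows "(\<Sum>j=1..m-1. g j * W m j k) = 0"
  using assms by (intro sum.neutral) (auto simp: W_def)

lemma nat_parity_cases:
  fixes k m :: nat
  obtains "k = 0" | "2 * m < k" | i where "1 \<le> i" "i \<le> m" "k = 2 * i - 1"
    | i where "1 \<le> i" "i \<le> m" "k = 2 * i"
proof (cases "k = 0 \<or> 2 * m < k")
  case False
  then show thesis
  proof (cases "even k")
    case True
    then show thesis using False that(4)[of "k div 2"] by auto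
  next
    case odd: False
    then show thesis using False that(3)[of "(k + 1) div 2"] by (auto elim: oddE)
  qed
qed (use that in auto)

lemma pmf_representation:
  fixes q g :: "nat \<Rightarrow> real" and c :: real and m :: nat
  assumes "m \<ge> 2"
    and q_odd: "\<And>i. 1 \<le> i \<Longrightarrow> i \<le> m \<Longrightarrow> q (2 * i - 1) = q 1 + 2 * (\<Sum>j=1..<i. g j)"
    and q_even: "\<And>i. 1 \<le> i \<Longrightarrow> i < m \<Longrightarrow>
      q (2 * i) = q (2 * m) + g m + g i + 2 * (\<Sum>j=Suc i..<m. g j)"
    and q_0: "q 0 = 1 - c + q (2 * m) + (\<Sum>j=1..<m. g j)"
    and q_beyond: "\<And>k. 2 * m < k \<Longrightarrow> q k = 0"
  shows "q k = (1 - c) * (if k = 0 then 1 else 0)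
    + (real m * q 1 * U_O m k + real (m + 1) * q (2 * m) * U_E m k
       + (real m - 1) * g m * U_Oup1 m k + (\<Sum>j=1..m-1. 2 * real m * g j * W m j k))"
proof -
  have m_gt_1: "real m > 1" and range: "{1..m-1} = {1..<m}"
    using assms(1) by auto
  have weighted: "(\<Sum>j=1..m-1. 2 * real m * g j * W m j k) = 2 * real m * (\<Sum>j=1..m-1. g j * W m j k)"
    by (simp add: sum_distrib_left mult.assoc)
  show ?thesis
  proof (cases k rule: nat_parity_cases[where m = m])
    case 1
    then show ?thesis
      unfolding 1 sum_W_zero using m_gt_1 range q_0 by (simp add: U_O_def U_E_def U_Oup1_def flip: sum_distrib_left)
  next
    case 2
    then show ?thesis
      using q_beyond[OF 2] sum_W_vanish[OF disjI2[OF 2]] by (auto simp: U_O_def U_E_def U_Oup1_def)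
  next
    case (3 i)
    then show ?thesis
      unfolding weighted using m_gt_1 q_odd[OF 3(1,2)] sum_W_odd[OF 3(1,2), of g]
        U_O_odd[OF 3(1,2)] U_E_odd[OF 3(1)] U_Oup1_odd[OF 3(1)]
      by simp
  next
    case (4 i)
    show ?thesis
    proof (cases "i = m")
      case True
      then show ?thesis
        using 4 assms(1) sum_W_vanish[of k m] by (simp add: U_O_def U_E_def U_Oup1_def)
    next
      case False
      with 4 have "i < m" by simp
      with 4 have U: "U_O m k = 0" "U_E m k = 1 / real (m + 1)" "U_Oup1 m k = 1 / (real m - 1)"
        by (simp_all add: U_O_def U_E_def U_Oup1_even)
      have "2 * real m * (\<Sum>j=1..m-1. g j * W m j k) = 2 * (\<Sum>j=Suc i..<m. g j) + g i"
        unfolding 4(3) sum_W_even[OF 4(1) \<open>i < m\<close>] using m_gt_1 by (simp add: field_simps)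
      then show ?thesis
        unfolding weighted U using m_gt_1 q_even[OF 4(1) \<open>i < m\<close>] 4(1,3) by simp
    qed
  qed
qed

lemma nash_eq_sym: "nash_eq v1 v2 X Y \<Longrightarrow> nash_eq v2 v1 Y X"
  by (auto simp: nash_eq_def)

lemma nash_eq_pure_le:
  assumes "nash_eq v1 v2 X Y"
  shows "v1 * mid_cdf Y k - real k \<le> payoff v1 X Y"
proof -
  have "payoff v1 (return_pmf k) Y \<le> payoff v1 X Y"
    using assms strategy_return_pmf[of k] unfolding nash_eq_def by blast
  then show ?thesis
    by (simp only: payoff_return_pmf)
qed

lemma nash_eq_pure_on_support:
  assumes "nash_eq v1 v2 X Y" and "x \<in> set_pmf X"
  shows "v1 * mid_cdf Y x - real x = payoff v1 X Y"
proof (rule expectation_eq_bound_on_support[OF _ _ _ assms(2)])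
  have "strategy X"
    using assms(1) by (simp add: nash_eq_def)
  then show "measure_pmf.expectation X (\<lambda>x. v1 * mid_cdf Y x - real x) = payoff v1 X Y"
    and "integrable X (\<lambda>x. v1 * mid_cdf Y x - real x)"
    by (simp_all add: payoff_eq_expectation integrable_pure_payoff)
qed (rule nash_eq_pure_le[OF assms(1)])

lemma nash_eq_payoff_nonneg:
  assumes "nash_eq v1 v2 X Y" and "v1 \<ge> 0"
  shows "payoff v1 X Y \<ge> 0"
  using nash_eq_pure_le[OF assms(1), of 0] mult_nonneg_nonneg[OF assms(2) mid_cdf_nonneg[of Y 0]]
  by simp

lemma sum_odd_affine:
  "(\<Sum>i<n. 2 * (v - a - real (2 * i + 1))) = 2 * real n * (v - a - real n)"
  by (induction n) (auto simp: field_simps)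

lemma sum_even_affine:
  "(\<Sum>i<Suc n. 2 * (v - a - real (2 * i))) = 2 * (real n + 1) * (v - a - real n)"
  by (induction n) (auto simp: field_simps)

lemma odd_deviation_bound:
  assumes "strategy Y" and "v > 0" and dev: "\<And>k. v * mid_cdf Y k - real k \<le> a"
  shows "2 * real n * (v - a - real n) \<le> v * mean Y"
    and "2 * real n * (v - a - real n) = v * mean Y \<Longrightarrow> i < n \<Longrightarrow>
      v * mid_cdf Y (2 * i + 1) - real (2 * i + 1) = a"
proof -
  have le: "2 * (v - a - real (2 * i + 1)) \<le> v * (2 * (1 - mid_cdf Y (2 * i + 1)))" for i
    using dev[of "2 * i + 1"] by (simp add: right_diff_distrib)
  have "(\<Sum>i<n. v * (2 * (1 - mid_cdf Y (2 * i + 1)))) = v * (\<Sum>i<n. 2 * (1 - mid_cdf Y (2 * i + 1)))"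
    by (rule sum_distrib_left[symmetric])
  also have "\<dots> \<le> v * mean Y"
    by (rule mult_left_mono[OF sum_odd_mid_cdf_le_mean[OF assms(1)]]) (use assms(2) in simp)
  finally have upper: "(\<Sum>i<n. v * (2 * (1 - mid_cdf Y (2 * i + 1)))) \<le> v * mean Y" .
  moreover have lower: "2 * real n * (v - a - real n) \<le> (\<Sum>i<n. v * (2 * (1 - mid_cdf Y (2 * i + 1))))"
    unfolding sum_odd_affine[symmetric] by (intro sum_mono le)
  ultimately show "2 * real n * (v - a - real n) \<le> v * mean Y"
    by linarith
  assume "2 * real n * (v - a - real n) = v * mean Y" and "i < n"
  with upper lower have "(\<Sum>i<n. 2 * (v - a - real (2 * i + 1))) =
      (\<Sum>i<n. v * (2 * (1 - mid_cdf Y (2 * i + 1))))"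
    unfolding sum_odd_affine by linarith
  then have "2 * (v - a - real (2 * i + 1)) = v * (2 * (1 - mid_cdf Y (2 * i + 1)))"
    by (rule sum_mono_inv[OF _ le]) (use \<open>i < n\<close> in simp_all)
  then show "v * mid_cdf Y (2 * i + 1) - real (2 * i + 1) = a"
    by (simp add: algebra_simps)
qed

lemma even_deviation_bound:
  assumes "strategy Y" and "v > 0" and dev: "\<And>k. v * mid_cdf Y k - real k \<le> a"
  shows "2 * (real n + 1) * (v - a - real n) \<le> v * (mean Y + 1)"
    and "2 * (real n + 1) * (v - a - real n) = v * (mean Y + 1) \<Longrightarrow> i \<le> n \<Longrightarrow>
      v * mid_cdf Y (2 * i) - real (2 * i) = a"
proof -
  have le: "2 * (v - a - real (2 * i)) \<le> v * (2 * (1 - mid_cdf Y (2 * i)))" for i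
    using dev[of "2 * i"] by (simp add: right_diff_distrib)
  have "(\<Sum>i<Suc n. v * (2 * (1 - mid_cdf Y (2 * i)))) = v * (\<Sum>i<Suc n. 2 * (1 - mid_cdf Y (2 * i)))"
    by (rule sum_distrib_left[symmetric])
  also have "\<dots> \<le> v * (mean Y + 1)"
    by (rule mult_left_mono[OF sum_even_mid_cdf_le_mean[OF assms(1)]]) (use assms(2) in simp)
  finally have upper: "(\<Sum>i<Suc n. v * (2 * (1 - mid_cdf Y (2 * i)))) \<le> v * (mean Y + 1)" .
  moreover have lower:
    "2 * (real n + 1) * (v - a - real n) \<le> (\<Sum>i<Suc n. v * (2 * (1 - mid_cdf Y (2 * i))))"
    unfolding sum_even_affine[symmetric] by (intro sum_mono le)
  ultimately show "2 * (real n + 1) * (v - a - real n) \<le> v * (mean Y + 1)"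
    by linarith
  assume "2 * (real n + 1) * (v - a - real n) = v * (mean Y + 1)" and "i \<le> n"
  with upper lower have "(\<Sum>i<Suc n. 2 * (v - a - real (2 * i))) =
      (\<Sum>i<Suc n. v * (2 * (1 - mid_cdf Y (2 * i))))"
    unfolding sum_even_affine by linarith
  then have "2 * (v - a - real (2 * i)) = v * (2 * (1 - mid_cdf Y (2 * i)))"
    by (rule sum_mono_inv[OF _ le]) (use \<open>i \<le> n\<close> in simp_all)
  then show "v * mid_cdf Y (2 * i) - real (2 * i) = a"
    by (simp add: algebra_simps)
qed

lemma deviation_bounds_rigidity:
  fixes v1 v2 u1 u2 b M :: real
  assumes "v1 > 0" "v2 > 0" "u2 \<ge> 0" "0 < b" "b < M"
    and weak: "v2 \<le> 2 * (u2 + M)"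
    and strong: "2 * M * (v1 - u1 - M) \<le> v1 * b"
    and constant_sum: "v2 * (u1 + M) + v1 * (u2 + b) = v1 * v2"
  shows "u2 = 0 \<and> v2 = 2 * M"
proof -
  define y where "y = v1 - u1 - M"
  have v2y: "v2 * y = v1 * u2 + v1 * b"
    using constant_sum unfolding y_def by (simp add: algebra_simps)
  have My: "2 * M * y \<le> v1 * b"
    using strong unfolding y_def .
  have "0 < v1 * u2 + v1 * b"
    using assms(1,3,4) by (simp add: add_nonneg_pos)
  then have "y > 0"
    using v2y assms(2) zero_less_mult_pos by metis
  have "v1 * b < v1 * M"
    using assms(1,5) by simp
  moreover have "2 * y * M \<le> v1 * b"
    using My by (simp add: algebra_simps)
  ultimately have "2 * y * M < v1 * M"
    by linarith
  then have "2 * y < v1"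
    using assms(4,5) by simp
  have "(v2 - 2 * M) * y = v1 * u2 + (v1 * b - 2 * M * y)"
    using v2y by (simp add: algebra_simps)
  then have key: "v1 * u2 \<le> (v2 - 2 * M) * y"
    using My by linarith
  also have "\<dots> \<le> 2 * u2 * y"
    using weak \<open>y > 0\<close> by (intro mult_right_mono) auto
  finally have "(v1 - 2 * y) * u2 \<le> 0"
    by (simp add: algebra_simps)
  then have "u2 = 0"
    using \<open>2 * y < v1\<close> assms(3) by (simp add: mult_le_0_iff)
  moreover have "v2 \<ge> 2 * M"
    using key \<open>u2 = 0\<close> \<open>y > 0\<close> by (simp add: zero_le_mult_iff)
  ultimately show ?thesis
    using weak by simp
qed

lemma pmf_of_linear_mid_cdf:
  assumes lin: "\<And>k. k \<le> N \<Longrightarrow> mid_cdf X k = c * real k" and "k \<le> N"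
  shows "pmf X k = (if odd k then 2 * c else 0)"
  using assms(2)
proof (induction k)
  case 0
  then show ?case
    using lin[of 0] by (simp add: mid_cdf_0)
next
  case (Suc k)
  then have "c * real (Suc k) = c * real k + (pmf X k + pmf X (Suc k)) / 2"
    using lin[of k] lin[of "Suc k"] mid_cdf_Suc[of X k] by simp
  then show ?case
    using Suc by (auto simp: algebra_simps)
qed

locale all_pay_equilibrium =
  fixes v1 v2 b :: real and m :: nat and X Y :: "nat pmf"
  assumes v1_ge_v2: "v1 \<ge> v2" and v2_pos: "v2 > 0"
    and b_pos: "0 < b" and b_less_m: "b < real m"
    and mean_X: "mean X = real m" and mean_Y: "mean Y = b"
    and nash: "nash_eq v1 v2 X Y"
begin

lemma v1_pos: "v1 > 0"
  using v1_ge_v2 v2_pos by simp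

lemma m_pos: "real m > 0"
  using b_pos b_less_m by simp

lemma strategy_X: "strategy X" and strategy_Y: "strategy Y"
  using nash by (simp_all add: nash_eq_def)

lemma nash_swapped: "nash_eq v2 v1 Y X"
  using nash by (rule nash_eq_sym)

lemma weak_player_value: "payoff v2 Y X = 0 \<and> v2 = 2 * real m"
proof (rule deviation_bounds_rigidity)
  have "2 * (real m + 1) * (v2 - payoff v2 Y X - real m) \<le> v2 * (real m + 1)"
    using even_deviation_bound[OF strategy_X v2_pos nash_eq_pure_le[OF nash_swapped], of m]
    by (simp add: mean_X)
  then have "(real m + 1) * (2 * (v2 - payoff v2 Y X - real m)) \<le> (real m + 1) * v2"
    by (simp add: algebra_simps)
  then show "v2 \<le> 2 * (payoff v2 Y X + real m)"
    by (simp add: mult_le_cancel_left_pos add_pos_nonneg)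
  show "2 * real m * (v1 - payoff v1 X Y - real m) \<le> v1 * b"
    using odd_deviation_bound[OF strategy_Y v1_pos nash_eq_pure_le[OF nash], of m]
    by (simp add: mean_Y)
  show "v2 * (payoff v1 X Y + real m) + v1 * (payoff v2 Y X + b) = v1 * v2"
    using payoff_constant_sum[of v2 v1 X Y] by (simp add: mean_X mean_Y)
qed (use v1_pos v2_pos b_pos b_less_m nash_eq_payoff_nonneg[OF nash_swapped] in auto)

lemma v2_eq: "v2 = 2 * real m" and weak_player_payoff: "payoff v2 Y X = 0"
  using weak_player_value by blast+

lemma mid_cdf_X: "k \<le> 2 * m \<Longrightarrow> mid_cdf X k = real k / (2 * real m)"
proof -
  note pure = nash_eq_pure_le[OF nash_swapped, unfolded weak_player_payoff]
  have tight: "v2 * mid_cdf X k - real k = 0" if k: "k \<le> 2 * m" for k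
  proof (cases "even k")
    case True
    then obtain i where "k = 2 * i" "i \<le> m"
      using k by (auto elim: evenE)
    then show ?thesis
      using even_deviation_bound(2)[OF strategy_X v2_pos pure, of m i]
      by (simp add: mean_X v2_eq algebra_simps)
  next
    case False
    then obtain i where "k = 2 * i + 1" "i < m"
      using k by (auto elim: oddE)
    then show ?thesis
      using odd_deviation_bound(2)[OF strategy_X v2_pos pure, of m i]
      by (simp add: mean_X v2_eq algebra_simps)
  qed
  then show "k \<le> 2 * m \<Longrightarrow> mid_cdf X k = real k / (2 * real m)"
    using m_pos by (simp add: v2_eq field_simps)
qed

lemma pmf_X: "k \<le> 2 * m \<Longrightarrow> pmf X k = (if odd k then 1 / real m else 0)"
  using pmf_of_linear_mid_cdf[of "2 * m" X "1 / (2 * real m)" k] mid_cdf_X by simp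

lemma support_Y:
  assumes "y \<in> set_pmf Y"
  shows "y \<le> 2 * m"
proof -
  have "real y = 2 * real m * mid_cdf X y"
    using nash_eq_pure_on_support[OF nash_swapped assms] unfolding weak_player_payoff unfolding v2_eq by simp
  also have "\<dots> \<le> 2 * real m"
    using mid_cdf_le_1[of X y] m_pos by simp
  finally show ?thesis
    by simp
qed

lemma pmf_Y_beyond: "2 * m < k \<Longrightarrow> pmf Y k = 0"
  using support_Y by (meson not_le set_pmf_iff)

lemma indifference_odd:
  assumes "1 \<le> i" "i \<le> m"
  shows "v1 * mid_cdf Y (2 * i - 1) - real (2 * i - 1) = payoff v1 X Y"
proof (rule nash_eq_pure_on_support[OF nash])
  show "2 * i - 1 \<in> set_pmf X"
    using assms pmf_X[of "2 * i - 1"] m_pos by (simp add: set_pmf_iff)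
qed

lemma payoff_X: "payoff v1 X Y = v1 - real m - v1 * b / (2 * real m)"
proof -
  have "2 * real m * (payoff v1 X Y + real m) + v1 * b = 2 * real m * v1"
    using payoff_constant_sum[of v2 v1 X Y] unfolding weak_player_payoff unfolding v2_eq
    by (simp add: mean_X mean_Y algebra_simps)
  then show ?thesis
    using m_pos by (simp add: field_simps)
qed

lemma pmf_Y_step:
  assumes "1 \<le> i" "i < m"
  shows "pmf Y (2 * i - 1) + 2 * pmf Y (2 * i) + pmf Y (2 * i + 1) = 4 / v1"
proof -
  have "v1 * mid_cdf Y (2 * i + 1) - real (2 * i + 1) = v1 * mid_cdf Y (2 * i - 1) - real (2 * i - 1)"
    using indifference_odd[of "Suc i"] indifference_odd[of i] assms by simp
  moreover have "mid_cdf Y (2 * i + 1) = mid_cdf Y (2 * i - 1)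
      + (pmf Y (2 * i - 1) + 2 * pmf Y (2 * i) + pmf Y (2 * i + 1)) / 2"
    using mid_cdf_pred[of "2 * i" Y] mid_cdf_Suc[of Y "2 * i"] assms(1) by (simp add: field_simps)
  ultimately have "v1 * (pmf Y (2 * i - 1) + 2 * pmf Y (2 * i) + pmf Y (2 * i + 1)) = 4"
    using assms(1) by (simp add: algebra_simps of_nat_diff)
  then show ?thesis
    using v1_pos by (simp add: field_simps)
qed

lemma pmf_Y_pair_le:
  assumes "1 \<le> i" "i \<le> m"
  shows "pmf Y (2 * i - 1) + pmf Y (2 * i) \<le> 2 / v1"
proof -
  have "v1 * mid_cdf Y (2 * i) - real (2 * i) \<le> v1 * mid_cdf Y (2 * i - 1) - real (2 * i - 1)"
    using nash_eq_pure_le[OF nash, of "2 * i"] indifference_odd[OF assms] by simp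
  then have "v1 * (pmf Y (2 * i - 1) + pmf Y (2 * i)) \<le> 2"
    using mid_cdf_pred[of "2 * i"] assms(1) by (simp add: algebra_simps of_nat_diff)
  then show ?thesis
    using v1_pos by (simp add: field_simps)
qed

lemma indifference_first: "v1 * (pmf Y 0 + pmf Y 1 / 2) - 1 = payoff v1 X Y"
  using indifference_odd[of 1] m_pos mid_cdf_Suc[of Y 0] by (simp add: mid_cdf_0 field_simps)

lemma indifference_last:
  "v1 * (1 - pmf Y (2 * m) - pmf Y (2 * m - 1) / 2) - (2 * real m - 1) = payoff v1 X Y"
proof -
  have "1 \<le> m"
    using m_pos by simp
  moreover have "mid_cdf Y (2 * m) = 1 - pmf Y (2 * m) / 2"
    using mid_cdf_at_max support_Y by blast
  ultimately have "mid_cdf Y (2 * m - 1) = 1 - pmf Y (2 * m) - pmf Y (2 * m - 1) / 2"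
    using mid_cdf_pred[of "2 * m"] by (simp add: field_simps)
  then show ?thesis
    using indifference_odd[of m] \<open>1 \<le> m\<close> by (simp add: of_nat_diff)
qed

lemma zero_bid_le: "v1 * pmf Y 0 / 2 \<le> payoff v1 X Y"
  using nash_eq_pure_le[OF nash, of 0] by (simp add: mid_cdf_0)

text \<open>Multiplied by 2 m^2 / b, gap j is the weight of W_j in the mixture.\<close>

definition gap :: "nat \<Rightarrow> real" where
  "gap j = 2 / v1 - pmf Y (2 * j - 1) - pmf Y (2 * j)"

lemma gap_nonneg: "1 \<le> j \<Longrightarrow> j \<le> m \<Longrightarrow> gap j \<ge> 0"
  using pmf_Y_pair_le[of j] by (simp add: gap_def)

lemma pmf_Y_odd:
  assumes "1 \<le> i" "i \<le> m"
  shows "pmf Y (2 * i - 1) = pmf Y 1 + 2 * (\<Sum>j=1..<i. gap j)"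
  using assms
proof (induction i rule: nat_induct_at_least)
  case (Suc i)
  then have "pmf Y (2 * Suc i - 1) = pmf Y (2 * i - 1) + 2 * gap i"
    using pmf_Y_step[of i] by (simp add: gap_def algebra_simps)
  then show ?case
    using Suc by simp
qed simp

lemma pmf_Y_last_odd: "pmf Y (2 * m - 1) = pmf Y 1 + 2 * (\<Sum>j=1..<m. gap j)"
  using pmf_Y_odd[of m] m_pos by simp

lemma pmf_Y_even:
  assumes "1 \<le> i" "i < m"
  shows "pmf Y (2 * i) = pmf Y (2 * m) + gap m + gap i + 2 * (\<Sum>j=Suc i..<m. gap j)"
proof -
  have "(\<Sum>j=1..<m. gap j) = (\<Sum>j=1..<i. gap j) + (\<Sum>j=i..<m. gap j)"
    using assms by (intro sum.atLeastLessThan_concat[symmetric]) auto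
  also have "(\<Sum>j=i..<m. gap j) = gap i + (\<Sum>j=Suc i..<m. gap j)"
    using assms by (intro sum.atLeast_Suc_lessThan)
  finally show ?thesis
    using pmf_Y_odd[of i] pmf_Y_last_odd assms by (simp add: gap_def)
qed

lemma mixing_weight: "b / real m = pmf Y (2 * m - 1) + 2 * pmf Y (2 * m) + 2 * ((real m - 1) / v1)"
proof -
  have "v1 * (b / real m) = v1 * (pmf Y (2 * m - 1) + 2 * pmf Y (2 * m)) + 2 * (real m - 1)"
    using indifference_last m_pos by (simp add: payoff_X field_simps)
  then show ?thesis
    using v1_pos by (simp add: field_simps)
qed

lemma pmf_Y_0: "pmf Y 0 = 1 - b / real m + pmf Y (2 * m) + (\<Sum>j=1..<m. gap j)"
proof -
  have "v1 * pmf Y 0 = v1 - real m - v1 * b / (2 * real m) + 1 - v1 * pmf Y 1 / 2"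
    using indifference_first by (simp add: payoff_X algebra_simps)
  then have "pmf Y 0 = 1 - (real m - 1) / v1 - b / (2 * real m) - pmf Y 1 / 2"
    using v1_pos m_pos by (simp add: field_simps)
  moreover have "b / (2 * real m) = b / real m / 2"
    by simp
  ultimately show ?thesis
    using mixing_weight pmf_Y_last_odd by linarith
qed

lemma gap_last: "gap m = 2 / v1 - pmf Y 1 - 2 * (\<Sum>j=1..<m. gap j) - pmf Y (2 * m)"
  using pmf_Y_last_odd by (simp add: gap_def)

lemma weights_sum:
  "real m * pmf Y 1 + real (m + 1) * pmf Y (2 * m) + (real m - 1) * gap m
     + 2 * real m * (\<Sum>j=1..<m. gap j) = b / real m"
  unfolding gap_last mixing_weight pmf_Y_last_odd using v1_pos by (simp add: field_simps)

lemma top_mass_gaps_le: "pmf Y (2 * m) + (\<Sum>j=1..<m. gap j) \<le> 1 - 2 * real m / v1"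
proof -
  have "pmf Y 0 \<le> 2 - 2 * real m / v1 - b / real m"
    using zero_bid_le v1_pos m_pos by (simp add: payoff_X field_simps)
  then show ?thesis
    using pmf_Y_0 by linarith
qed

lemma gaps_gap_last_le: "(\<Sum>j=1..<m. gap j) + gap m \<le> 1 - b / real m"
proof -
  have "2 / v1 \<le> pmf Y 0 + pmf Y 1"
    using zero_bid_le indifference_first v1_pos by (simp add: field_simps)
  then show ?thesis
    using pmf_Y_0 gap_last by linarith
qed

theorem weak_player_mixture:
  assumes "m \<ge> 2"
  shows "\<exists>lO lE lOu :: real. \<exists>l :: nat \<Rightarrow> real.
    lO \<ge> 0 \<and> lE \<ge> 0 \<and> lOu \<ge> 0 \<and> (\<forall>j\<in>{1..m-1}. l j \<ge> 0) \<and>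
    lO + lE + lOu + (\<Sum>j=1..m-1. l j) = 1 \<and>
    lE / real (m + 1) + 1 / (2 * real m) * (\<Sum>j=1..m-1. l j) \<le> real m / b * (1 - v2 / v1) \<and>
    lO / real m + lE / real (m + 1) + lOu / (real m - 1)
      + 1 / real m * (\<Sum>j=1..m-1. l j) = 2 * real m / (b * v1) \<and>
    (b > real m - 1 \<longrightarrow>
       1 / (2 * real m) * (\<Sum>j=1..m-1. l j) + lOu / (real m - 1) \<le> (real m - b) / b) \<and>
    (\<forall>k. pmf Y k = (1 - b / real m) * (if k = 0 then 1 else 0)
       + b / real m * (lO * U_O m k + lE * U_E m k + lOu * U_Oup1 m k
                       + (\<Sum>j=1..m-1. l j * W m j k)))"
proof -
  define c where "c = b / real m"
  define S where "S = (\<Sum>j=1..<m. gap j)"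
  have c_pos: "c > 0" and m_gt_1: "real m > 1"
    using b_pos m_pos assms by (simp_all add: c_def)
  have range: "{1..m-1} = {1..<m}"
    using assms by auto
  define lO where "lO = real m * pmf Y 1 / c"
  define lE where "lE = real (m + 1) * pmf Y (2 * m) / c"
  define lOu where "lOu = (real m - 1) * gap m / c"
  define l where "l j = 2 * real m * gap j / c" for j
  have sum_l: "(\<Sum>j=1..m-1. l j) = 2 * real m * S / c"
    unfolding range l_def S_def by (simp add: sum_divide_distrib sum_distrib_left)
  have ratios: "lO / real m = pmf Y 1 / c" "lE / real (m + 1) = pmf Y (2 * m) / c"
    "lOu / (real m - 1) = gap m / c" "1 / (2 * real m) * (\<Sum>j=1..m-1. l j) = S / c"
    "1 / real m * (\<Sum>j=1..m-1. l j) = 2 * S / c"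
    unfolding sum_l using m_gt_1 by (simp_all add: lO_def lE_def lOu_def)
  show ?thesis
  proof (intro exI conjI ballI)
    show "lO \<ge> 0" "lE \<ge> 0" "lOu \<ge> 0"
      using c_pos m_gt_1 gap_nonneg[of m] assms by (simp_all add: lO_def lE_def lOu_def)
    show "l j \<ge> 0" if "j \<in> {1..m-1}" for j
      using that c_pos gap_nonneg[of j] by (auto simp: l_def)
    have "lO + lE + lOu + (\<Sum>j=1..m-1. l j) = (real m * pmf Y 1 + real (m + 1) * pmf Y (2 * m)
        + (real m - 1) * gap m + 2 * real m * S) / c"
      unfolding sum_l lO_def lE_def lOu_def by (simp add: add_divide_distrib)
    then show "lO + lE + lOu + (\<Sum>j=1..m-1. l j) = 1"
      using weights_sum c_pos unfolding S_def c_def[symmetric] by simp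
    have "lE / real (m + 1) + 1 / (2 * real m) * (\<Sum>j=1..m-1. l j) = (pmf Y (2 * m) + S) / c"
      unfolding ratios by (simp add: add_divide_distrib)
    also have "\<dots> \<le> (1 - 2 * real m / v1) / c"
      using top_mass_gaps_le c_pos unfolding S_def by (simp add: divide_right_mono)
    finally show "lE / real (m + 1) + 1 / (2 * real m) * (\<Sum>j=1..m-1. l j) \<le> real m / b * (1 - v2 / v1)"
      by (simp add: c_def v2_eq mult.commute)
    have "lO / real m + lE / real (m + 1) + lOu / (real m - 1) + 1 / real m * (\<Sum>j=1..m-1. l j)
        = (pmf Y 1 + pmf Y (2 * m) + gap m + 2 * S) / c"
      unfolding ratios by (simp add: add_divide_distrib)
    also have "pmf Y 1 + pmf Y (2 * m) + gap m + 2 * S = 2 / v1"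
      unfolding gap_last S_def by simp
    finally show "lO / real m + lE / real (m + 1) + lOu / (real m - 1) + 1 / real m * (\<Sum>j=1..m-1. l j)
        = 2 * real m / (b * v1)"
      using m_pos by (simp add: c_def field_simps)
    \<comment> \<open>holds even without the hypothesis b > m - 1\<close>
    show "b > real m - 1 \<longrightarrow>
      1 / (2 * real m) * (\<Sum>j=1..m-1. l j) + lOu / (real m - 1) \<le> (real m - b) / b"
    proof
      have "1 / (2 * real m) * (\<Sum>j=1..m-1. l j) + lOu / (real m - 1) = (S + gap m) / c"
        unfolding ratios by (simp add: add_divide_distrib)
      also have "\<dots> \<le> (1 - c) / c"
        using gaps_gap_last_le[folded c_def] c_pos unfolding S_def by (simp add: divide_right_mono)
      also have "\<dots> = (real m - b) / b"
        using m_pos b_pos by (simp add: c_def field_simps)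
      finally show "1 / (2 * real m) * (\<Sum>j=1..m-1. l j) + lOu / (real m - 1) \<le> (real m - b) / b" .
    qed
    show "\<forall>k. pmf Y k = (1 - b / real m) * (if k = 0 then 1 else 0)
       + b / real m * (lO * U_O m k + lE * U_E m k + lOu * U_Oup1 m k + (\<Sum>j=1..m-1. l j * W m j k))"
    proof
      fix k
      have scale: "c * (x / c * u) = x * u" for x u
        using c_pos by simp
      have "pmf Y k = (1 - c) * (if k = 0 then 1 else 0)
          + (real m * pmf Y 1 * U_O m k + real (m + 1) * pmf Y (2 * m) * U_E m k
             + (real m - 1) * gap m * U_Oup1 m k + (\<Sum>j=1..m-1. 2 * real m * gap j * W m j k))"
        by (rule pmf_representation[OF assms pmf_Y_odd pmf_Y_even _ pmf_Y_beyond])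
           (simp_all add: pmf_Y_0 c_def)
      then show "pmf Y k = (1 - b / real m) * (if k = 0 then 1 else 0)
         + b / real m * (lO * U_O m k + lE * U_E m k + lOu * U_Oup1 m k + (\<Sum>j=1..m-1. l j * W m j k))"
        unfolding c_def[symmetric] lO_def lE_def lOu_def l_def
        using c_pos by (simp add: distrib_left sum_distrib_left scale mult.assoc)
    qed
  qed
qed

theorem weak_player_mixture_single:
  assumes "m = 1"
  shows "\<exists>lO lE :: real. lO \<ge> 0 \<and> lE \<ge> 0 \<and> lO + lE = 1 \<and>
    lE / 2 \<ge> 1 - 2 / (b * v1) \<and> lE / 2 \<le> 1 / b - 2 / (b * v1) \<and>
    (\<forall>k. pmf Y k = (1 - b / real m) * (if k = 0 then 1 else 0)
       + b / real m * (lO * U_O 1 k + lE * U_E 1 k))"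
proof -
  have b_eq: "b = pmf Y 1 + 2 * pmf Y 2"
    using mixing_weight assms by simp
  have "pmf Y 0 = 1 - b + pmf Y 2" and "pmf Y 2 \<le> 1 - 2 / v1" and "pmf Y 1 + pmf Y 2 \<le> 2 / v1"
    using pmf_Y_0 top_mass_gaps_le pmf_Y_pair_le[of 1] assms by simp_all
  have ratio: "(x - 2 / v1) / b = x / b - 2 / (b * v1)" for x
    using b_pos v1_pos by (simp add: field_simps)
  show ?thesis
  proof (intro exI conjI allI)
    show "pmf Y 1 / b \<ge> 0" "2 * pmf Y 2 / b \<ge> 0"
      using b_pos by simp_all
    show "pmf Y 1 / b + 2 * pmf Y 2 / b = 1"
      using b_eq b_pos by (simp flip: add_divide_distrib)
    have "(b - 2 / v1) / b \<le> pmf Y 2 / b"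
      using b_eq \<open>pmf Y 1 + pmf Y 2 \<le> 2 / v1\<close> b_pos by (intro divide_right_mono) simp_all
    then show "2 * pmf Y 2 / b / 2 \<ge> 1 - 2 / (b * v1)"
      using b_pos by (simp add: ratio)
    have "pmf Y 2 / b \<le> (1 - 2 / v1) / b"
      using \<open>pmf Y 2 \<le> 1 - 2 / v1\<close> b_pos by (intro divide_right_mono) simp_all
    then show "2 * pmf Y 2 / b / 2 \<le> 1 / b - 2 / (b * v1)"
      by (simp add: ratio)
    fix k :: nat
    consider "k = 0" | "k = 1" | "k = 2" | "k > 2"
      by linarith
    then show "pmf Y k = (1 - b / real m) * (if k = 0 then 1 else 0)
       + b / real m * (pmf Y 1 / b * U_O 1 k + 2 * pmf Y 2 / b * U_E 1 k)"
      using assms b_pos \<open>pmf Y 0 = 1 - b + pmf Y 2\<close> pmf_Y_beyond[of k]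
      by cases (simp_all add: U_O_def U_E_def)
  qed
qed

end

theorem lemma2:
  fixes v1 v2 b :: real and m :: nat and X Y :: "nat pmf"
  assumes "v1 \<ge> v2" and "v2 > 0"
    and "m \<ge> 1" and "0 < b" and "b < real m"
    and "mean X = real m" and "mean Y = b"
    and "nash_eq v1 v2 X Y"
  shows "(m = 1 \<longrightarrow>
            (\<exists>lO lE :: real. lO \<ge> 0 \<and> lE \<ge> 0 \<and> lO + lE = 1 \<and>
               lE / 2 \<ge> 1 - 2 / (b * v1) \<and>
               lE / 2 \<le> 1 / b - 2 / (b * v1) \<and>
               (\<forall>k. pmf Y k = (1 - b / real m) * (if k = 0 then 1 else 0)
                    + b / real m * (lO * U_O 1 k + lE * U_E 1 k))))
       \<and> (m \<ge> 2 \<longrightarrow>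
            (\<exists>lO lE lOu :: real. \<exists>l :: nat \<Rightarrow> real.
               lO \<ge> 0 \<and> lE \<ge> 0 \<and> lOu \<ge> 0 \<and> (\<forall>j\<in>{1..m-1}. l j \<ge> 0) \<and>
               lO + lE + lOu + (\<Sum>j=1..m-1. l j) = 1 \<and>
               lE / real (m + 1) + 1 / (2 * real m) * (\<Sum>j=1..m-1. l j)
                 \<le> real m / b * (1 - v2 / v1) \<and>
               lO / real m + lE / real (m + 1) + lOu / (real m - 1)
                 + 1 / real m * (\<Sum>j=1..m-1. l j) = 2 * real m / (b * v1) \<and>
               (b > real m - 1 \<longrightarrow>
                  1 / (2 * real m) * (\<Sum>j=1..m-1. l j) + lOu / (real m - 1)
                    \<le> (real m - b) / b) \<and>
               (\<forall>k. pmf Y k = (1 - b / real m) * (if k = 0 then 1 else 0)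
                    + b / real m * (lO * U_O m k + lE * U_E m k + lOu * U_Oup1 m k
                                    + (\<Sum>j=1..m-1. l j * W m j k)))))"
proof -
  interpret all_pay_equilibrium v1 v2 b m X Y
    using assms by unfold_locales
  show ?thesis
    using weak_player_mixture_single weak_player_mixture by blast
qed

end
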